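(* The twist polynomial of set systems satisfies the four-term relation: for every proper set system $D=(E,\mathcal{F})$ and every pair of distinct elements $a,b\in E$, $$\partial_{\omega_{D}}(z)+\partial_{\omega_{\widetilde{D'}_{ab}}}(z)-\partial_{\omega_{D'_{ab}}}(z)-\partial_{\omega_{\widetilde{D}_{ab}}}(z)=0.$$
   Context: A set system $D=(E,\mathcal{F})$ is a finite set $E$ together with a collection $\mathcal{F}$ of subsets of $E$ (feasible sets); proper means $\mathcal{F}\neq\emptyset$. $\triangle$ denotes symmetric difference. For $A\subseteq E$, the twist is $D*A=(E,\{A\triangle X: X\in\mathcal{F}\})$. The width $\omega(D)$ is the size of a largest feasible set minus the size of a smallest feasible set. The twist polynomial is $\partial_{\omega_D}(z)=\sum_{A\subseteq E} z^{\omega(D*A)}$. For distinct $a,b\in E$: handle sliding of $a$ over $b$ gives $\widetilde{D}_{ab}=(E,\mathcal{F}\triangle\{F\cup\{a\}\mid F\cup\{b\}\in\mathcal{F},\ F\subseteq E\setminus\{a,b\}\})$; exchanging handle ends of $a$ and $b$ gives $D'_{ab}=(E,\mathcal{F}\triangle\{F\cup\{a,b\}\mid F\in\mathcal{F},\ F\subseteq E\setminus\{a,b\}\})$; and $\widetilde{D'}_{ab}$ denotes the result of first exchanging handle ends of $a,b$ in $D$ and then sliding $a$ over $b$ in the resulting set system. *)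

theory Defs
  imports Main "HOL-Computational_Algebra.Polynomial"
begin

definition symdiff :: "'a set \<Rightarrow> 'a set \<Rightarrow> 'a set" (infixl "\<triangle>" 65) where
  "X \<triangle> Y = (X - Y) \<union> (Y - X)"

type_synonym 'a setsys = "'a set \<times> 'a set set"

definition set_system :: "'a setsys \<Rightarrow> bool" where
  "set_system D \<longleftrightarrow> finite (fst D) \<and> snd D \<subseteq> Pow (fst D)"

definition proper :: "'a setsys \<Rightarrow> bool" where
  "proper D \<longleftrightarrow> snd D \<noteq> {}"

definition twist :: "'a setsys \<Rightarrow> 'a set \<Rightarrow> 'a setsys" where
  "twist D A = (fst D, {A \<triangle> X | X. X \<in> snd D})"

definition width :: "'a setsys \<Rightarrow> nat" where
  "width D = Max (card ` snd D) - Min (card ` snd D)"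

definition twist_poly :: "'a setsys \<Rightarrow> int poly" where
  "twist_poly D = (\<Sum>A\<in>Pow (fst D). monom 1 (width (twist D A)))"

definition handle_slide :: "'a setsys \<Rightarrow> 'a \<Rightarrow> 'a \<Rightarrow> 'a setsys" where
  "handle_slide D a b = (fst D, snd D \<triangle>
     {F \<union> {a} | F. F \<union> {b} \<in> snd D \<and> F \<subseteq> fst D - {a, b}})"

definition handle_exchange :: "'a setsys \<Rightarrow> 'a \<Rightarrow> 'a \<Rightarrow> 'a setsys" where
  "handle_exchange D a b = (fst D, snd D \<triangle>
     {F \<union> {a, b} | F. F \<in> snd D \<and> F \<subseteq> fst D - {a, b}})"

end

theory Submission
  imports Defs
begin

text \<open>Fix A \<subseteq> E; the width of D * A depends only on the set of sizes
  |A \<triangle> X| with X feasible. For G \<subseteq> E - {a, b}: if a and b are both in A or both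
  outside A, then |A \<triangle> (G \<union> {a})| = |A \<triangle> (G \<union> {b})|, so sliding a over b
  does not change this set of sizes; otherwise |A \<triangle> (G \<union> {a, b})| = |A \<triangle> G|,
  so exchanging the handle ends of a and b does not change it. Since sliding and
  exchanging commute, the four terms of the relation cancel in pairs for every A.\<close>

lemma image_symdiff_eq_image:
  assumes "\<And>X. X \<in> S \<Longrightarrow> p X \<in> F - S \<and> f (p X) = f X"
  shows "f ` (F \<triangle> S) = f ` F"
proof
  show "f ` (F \<triangle> S) \<subseteq> f ` F"
  proof
    fix y assume "y \<in> f ` (F \<triangle> S)"
    then obtain X where X: "X \<in> F \<triangle> S" "y = f X" by blast
    show "y \<in> f ` F"
    proof (cases "X \<in> F")
      case True
      then show ?thesis using X by blast
    next
      case False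
      then have "p X \<in> F" "y = f (p X)" using assms X by (auto simp: symdiff_def)
      then show ?thesis by blast
    qed
  qed
  show "f ` F \<subseteq> f ` (F \<triangle> S)"
  proof
    fix y assume "y \<in> f ` F"
    then obtain X where X: "X \<in> F" "y = f X" by blast
    show "y \<in> f ` (F \<triangle> S)"
    proof (cases "X \<in> S")
      case True
      then have "p X \<in> F \<triangle> S" "y = f (p X)" using assms X by (auto simp: symdiff_def)
      then show ?thesis by blast
    next
      case False
      then show ?thesis using X by (auto simp: symdiff_def)
    qed
  qed
qed

lemma card_symdiff_insert:
  assumes "finite A" "finite G" "x \<notin> G"
  shows "card (A \<triangle> insert x G) =
           (if x \<in> A then card (A \<triangle> G) - 1 else Suc (card (A \<triangle> G)))"
proof -
  have fin: "finite (A \<triangle> G)" using assms by (simp add: symdiff_def)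
  have "A \<triangle> insert x G = (if x \<in> A then A \<triangle> G - {x} else insert x (A \<triangle> G))"
    using assms(3) by (auto simp: symdiff_def)
  moreover have "x \<in> A \<triangle> G \<longleftrightarrow> x \<in> A" using assms(3) by (simp add: symdiff_def)
  ultimately show ?thesis using fin by simp
qed

lemma card_symdiff_insert_swap:
  assumes "finite A" "finite G" "a \<notin> G" "b \<notin> G" "(a \<in> A) = (b \<in> A)"
  shows "card (A \<triangle> insert a G) = card (A \<triangle> insert b G)"
  using assms by (simp add: card_symdiff_insert)

lemma card_symdiff_insert_pair:
  assumes "finite A" "finite G" "a \<notin> G" "b \<notin> G" "a \<noteq> b" "(a \<in> A) \<noteq> (b \<in> A)"
  shows "card (A \<triangle> insert a (insert b G)) = card (A \<triangle> G)"
proof (cases "b \<in> A")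
  case True
  then have "b \<in> A \<triangle> G" using assms(4) by (simp add: symdiff_def)
  then have "card (A \<triangle> G) > 0"
    using assms(1,2) by (auto simp: card_gt_0_iff symdiff_def)
  with True show ?thesis using assms by (simp add: card_symdiff_insert)
next
  case False
  then show ?thesis using assms by (simp add: card_symdiff_insert)
qed

lemma fst_handle_slide [simp]: "fst (handle_slide D a b) = fst D"
  by (simp add: handle_slide_def)

lemma fst_handle_exchange [simp]: "fst (handle_exchange D a b) = fst D"
  by (simp add: handle_exchange_def)

lemma width_twist:
  "width (twist D A) = Max ((\<lambda>X. card (A \<triangle> X)) ` snd D) - Min ((\<lambda>X. card (A \<triangle> X)) ` snd D)"
proof -
  have "{A \<triangle> X | X. X \<in> snd D} = (\<lambda>X. A \<triangle> X) ` snd D" by blast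
  then show ?thesis by (simp add: width_def twist_def image_image)
qed

lemma width_twist_handle_slide:
  assumes "finite (fst D)" "finite A" "a \<noteq> b" "(a \<in> A) = (b \<in> A)"
  shows "width (twist (handle_slide D a b) A) = width (twist D A)"
proof -
  let ?S = "{G \<union> {a} | G. G \<union> {b} \<in> snd D \<and> G \<subseteq> fst D - {a, b}}"
  have "(\<lambda>X. card (A \<triangle> X)) ` (snd D \<triangle> ?S) = (\<lambda>X. card (A \<triangle> X)) ` snd D"
  proof (rule image_symdiff_eq_image[where p = "\<lambda>X. insert b (X - {a})"])
    fix X assume "X \<in> ?S"
    then obtain G where G: "X = insert a G" "insert b G \<in> snd D" "G \<subseteq> fst D - {a, b}"
      by auto
    have "finite G" "a \<notin> G" "b \<notin> G" using G(3) assms(1) finite_subset by auto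
    then have "card (A \<triangle> insert b G) = card (A \<triangle> X)"
      using G(1) assms(2,4) card_symdiff_insert_swap by metis
    moreover have "insert b (X - {a}) = insert b G" using G(1) \<open>a \<notin> G\<close> by auto
    moreover have "insert b G \<notin> ?S" using \<open>a \<notin> G\<close> assms(3) by blast
    ultimately show "insert b (X - {a}) \<in> snd D - ?S \<and>
        card (A \<triangle> insert b (X - {a})) = card (A \<triangle> X)"
      using G(2) by simp
  qed
  then show ?thesis by (simp add: width_twist handle_slide_def)
qed

lemma width_twist_handle_exchange:
  assumes "finite (fst D)" "finite A" "a \<noteq> b" "(a \<in> A) \<noteq> (b \<in> A)"
  shows "width (twist (handle_exchange D a b) A) = width (twist D A)"
proof -
  let ?S = "{G \<union> {a, b} | G. G \<in> snd D \<and> G \<subseteq> fst D - {a, b}}"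
  have "(\<lambda>X. card (A \<triangle> X)) ` (snd D \<triangle> ?S) = (\<lambda>X. card (A \<triangle> X)) ` snd D"
  proof (rule image_symdiff_eq_image[where p = "\<lambda>X. X - {a, b}"])
    fix X assume "X \<in> ?S"
    then obtain G where G: "X = insert a (insert b G)" "G \<in> snd D" "G \<subseteq> fst D - {a, b}"
      by auto
    have "finite G" "a \<notin> G" "b \<notin> G" using G(3) assms(1) finite_subset by auto
    then have "card (A \<triangle> G) = card (A \<triangle> X)"
      using G(1) assms(2-4) card_symdiff_insert_pair by metis
    moreover have "X - {a, b} = G" using G(1) \<open>a \<notin> G\<close> \<open>b \<notin> G\<close> by auto
    moreover have "G \<notin> ?S" using \<open>a \<notin> G\<close> by blast
    ultimately show "X - {a, b} \<in> snd D - ?S \<and> card (A \<triangle> (X - {a, b})) = card (A \<triangle> X)"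
      using G(2) by simp
  qed
  then show ?thesis by (simp add: width_twist handle_exchange_def)
qed

lemma handle_slide_exchange_commute:
  assumes "a \<noteq> b"
  shows "handle_slide (handle_exchange D a b) a b = handle_exchange (handle_slide D a b) a b"
proof -
  let ?X = "{G \<union> {a, b} | G. G \<in> snd D \<and> G \<subseteq> fst D - {a, b}}"
  let ?Y = "{G \<union> {a} | G. G \<union> {b} \<in> snd D \<and> G \<subseteq> fst D - {a, b}}"
  have "{G \<union> {a} | G. G \<union> {b} \<in> snd D \<triangle> ?X \<and> G \<subseteq> fst D - {a, b}} = ?Y"
    using assms by (auto simp: symdiff_def)
  moreover have "{G \<union> {a, b} | G. G \<in> snd D \<triangle> ?Y \<and> G \<subseteq> fst D - {a, b}} = ?X"
    by (auto simp: symdiff_def)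
  moreover have "(snd D \<triangle> ?X) \<triangle> ?Y = (snd D \<triangle> ?Y) \<triangle> ?X"
    by (auto simp: symdiff_def)
  ultimately show ?thesis by (simp add: handle_slide_def handle_exchange_def)
qed

theorem theorem3p7:
  fixes D :: "'a setsys" and a b :: 'a
  assumes "set_system D" and "proper D"
    and "a \<in> fst D" and "b \<in> fst D" and "a \<noteq> b"
  shows "twist_poly D + twist_poly (handle_slide (handle_exchange D a b) a b)
           - twist_poly (handle_exchange D a b) - twist_poly (handle_slide D a b) = 0"
proof -
  let ?Dx = "handle_exchange D a b" and ?Ds = "handle_slide D a b"
  let ?Dxs = "handle_slide (handle_exchange D a b) a b"
  let ?w = "\<lambda>D' A. monom (1::int) (width (twist D' A))"
  have fin: "finite (fst D)" using assms(1) by (simp add: set_system_def)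
  have "?w D A + ?w ?Dxs A - ?w ?Dx A - ?w ?Ds A = 0" if "A \<subseteq> fst D" for A
  proof (cases "(a \<in> A) = (b \<in> A)")
    case True
    have "finite A" using that fin finite_subset by blast
    with True show ?thesis
      using fin assms(5) width_twist_handle_slide[of D A a b] width_twist_handle_slide[of ?Dx A a b]
      by simp
  next
    case False
    have "finite A" using that fin finite_subset by blast
    with False show ?thesis
      using fin assms(5) width_twist_handle_exchange[of D A a b]
        width_twist_handle_exchange[of ?Ds A a b] handle_slide_exchange_commute[OF assms(5)]
      by simp
  qed
  then show ?thesis
    by (simp add: twist_poly_def sum_subtractf[symmetric] sum.distrib[symmetric])
qed

end
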